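(* Let $\iota:\mathcal{Q}\to\mathcal{P}$ be an aligned grid inclusion with $\mathcal{P},\mathcal{Q}$ finite and $\uparrow\iota(\mathcal{Q})=\mathcal{P}$. The functor $\mathrm{Lan}_\iota:\operatorname{rep}\mathcal{Q}\to\operatorname{rep}\mathcal{P}$, $N\mapsto N\circ\lfloor-\rfloor_\iota$, has a left adjoint $\mathrm{C}:\operatorname{rep}\mathcal{P}\to\operatorname{rep}\mathcal{Q}$, and for all $A,B\subseteq\mathcal{P}$ such that every $b\in B$ satisfies $a\le b$ for some $a\in A$, \[ \mathrm{C}\big(\mathbb{k}_{\uparrow A\setminus\uparrow B}\big)\cong\mathbb{k}_{\uparrow\lfloor A\rfloor_\iota\setminus\uparrow\lfloor B\rfloor_\iota}. \] In particular $\mathrm{C}$ maps spread-decomposable representations to spread-decomposable representations.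
   Context: Fix a field $\mathbb{k}$. Grid poset: finite product of total orders with product order. Aligned grid inclusion: a product $\iota_1\times\cdots\times\iota_n$ of injective order-preserving maps of total orders. $\uparrow X=\{p:\exists x\in X, x\le p\}$; $\lfloor p\rfloor_\iota:=\bigvee\{q\in\mathcal{Q}:\iota(q)\le p\}$ and $\lfloor X\rfloor_\iota=\{\lfloor x\rfloor_\iota:x\in X\}$. For a finite poset, $\operatorname{rep}$ denotes functors to finite-dimensional $\mathbb{k}$-vector spaces. $\mathbb{k}_S$ is the indicator representation of a convex set $S$. A spread is a nonempty convex zigzag-connected subset; spread-decomposable means isomorphic to a finite direct sum of spread representations. *)

theory Defs
  imports "Jordan_Normal_Form.Matrix"
begin

text \<open>A representation of P
(a functor to finite-dimensional k-vector spaces) is modelled skeletally: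
the space at p is k^(dim p) and M p q is the matrix of the structure map
M(p) -> M(q) for p <= q; dim p is the size of the identity matrix M p p.\<close>

type_synonym ('p,'k) rep = "'p \<Rightarrow> 'p \<Rightarrow> 'k mat"

definition rdim :: "('p,'k) rep \<Rightarrow> 'p \<Rightarrow> nat" where
  "rdim M p = dim_row (M p p)"

definition is_rep :: "'p set \<Rightarrow> ('p \<Rightarrow> 'p \<Rightarrow> bool) \<Rightarrow> ('p,'k::field) rep \<Rightarrow> bool" where
  "is_rep P lo M \<longleftrightarrow>
     (\<forall>p\<in>P. M p p = 1\<^sub>m (rdim M p)) \<and>
     (\<forall>p\<in>P. \<forall>q\<in>P. lo p q \<longrightarrow> M p q \<in> carrier_mat (rdim M q) (rdim M p)) \<and>
     (\<forall>p\<in>P. \<forall>q\<in>P. \<forall>r\<in>P. lo p q \<longrightarrow> lo q r \<longrightarrow> M q r * M p q = M p r)"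

definition rep_hom :: "'p set \<Rightarrow> ('p \<Rightarrow> 'p \<Rightarrow> bool) \<Rightarrow> ('p,'k::field) rep \<Rightarrow> ('p,'k) rep
    \<Rightarrow> ('p \<Rightarrow> 'k mat) \<Rightarrow> bool" where
  "rep_hom P lo M N f \<longleftrightarrow>
     (\<forall>p\<in>P. f p \<in> carrier_mat (rdim N p) (rdim M p)) \<and>
     (\<forall>p\<in>P. \<forall>q\<in>P. lo p q \<longrightarrow> f q * M p q = N p q * f p)"

definition rep_iso :: "'p set \<Rightarrow> ('p \<Rightarrow> 'p \<Rightarrow> bool) \<Rightarrow> ('p,'k::field) rep \<Rightarrow> ('p,'k) rep \<Rightarrow> bool" where
  "rep_iso P lo M N \<longleftrightarrow>
     (\<exists>f g. rep_hom P lo M N f \<and> rep_hom P lo N M g \<and>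
        (\<forall>p\<in>P. g p * f p = 1\<^sub>m (rdim M p) \<and> f p * g p = 1\<^sub>m (rdim N p)))"

text \<open>Indicator representation k_S (S assumed convex).\<close>
definition indicator_rep :: "'p set \<Rightarrow> ('p,'k::field) rep" where
  "indicator_rep S = (\<lambda>p q. if p \<in> S \<and> q \<in> S then 1\<^sub>m 1
        else 0\<^sub>m (if q \<in> S then 1 else 0) (if p \<in> S then 1 else 0))"

fun dsum_rep :: "('p,'k::field) rep list \<Rightarrow> ('p,'k) rep" where
  "dsum_rep [] = (\<lambda>p q. 0\<^sub>m 0 0)"
| "dsum_rep (M # Ms) = (\<lambda>p q. four_block_mat (M p q)
        (0\<^sub>m (dim_row (M p q)) (dim_col (dsum_rep Ms p q)))
        (0\<^sub>m (dim_row (dsum_rep Ms p q)) (dim_col (M p q)))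
        (dsum_rep Ms p q))"

definition upset :: "'p set \<Rightarrow> ('p \<Rightarrow> 'p \<Rightarrow> bool) \<Rightarrow> 'p set \<Rightarrow> 'p set" where
  "upset P lo X = {p\<in>P. \<exists>x\<in>X. lo x p}"

definition convex_in :: "'p set \<Rightarrow> ('p \<Rightarrow> 'p \<Rightarrow> bool) \<Rightarrow> 'p set \<Rightarrow> bool" where
  "convex_in P lo S \<longleftrightarrow> S \<subseteq> P \<and>
     (\<forall>a\<in>S. \<forall>b\<in>P. \<forall>c\<in>S. lo a b \<longrightarrow> lo b c \<longrightarrow> b \<in> S)"

definition zigzag_connected :: "('p \<Rightarrow> 'p \<Rightarrow> bool) \<Rightarrow> 'p set \<Rightarrow> bool" where
  "zigzag_connected lo S \<longleftrightarrow>
     (\<forall>x\<in>S. \<forall>y\<in>S. (x, y) \<in> ({(a, b). a \<in> S \<and> b \<in> S \<and> (lo a b \<or> lo b a)})\<^sup>*)"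

definition spread :: "'p set \<Rightarrow> ('p \<Rightarrow> 'p \<Rightarrow> bool) \<Rightarrow> 'p set \<Rightarrow> bool" where
  "spread P lo S \<longleftrightarrow> S \<noteq> {} \<and> convex_in P lo S \<and> zigzag_connected lo S"

definition spread_decomposable :: "'p set \<Rightarrow> ('p \<Rightarrow> 'p \<Rightarrow> bool) \<Rightarrow> ('p,'k::field) rep \<Rightarrow> bool" where
  "spread_decomposable P lo M \<longleftrightarrow>
     (\<exists>Ss. (\<forall>S\<in>set Ss. spread P lo S) \<and> rep_iso P lo M (dsum_rep (map indicator_rep Ss)))"

definition poset_join :: "'p set \<Rightarrow> ('p \<Rightarrow> 'p \<Rightarrow> bool) \<Rightarrow> 'p set \<Rightarrow> 'p" where
  "poset_join P lo S = (THE x. x \<in> P \<and> (\<forall>s\<in>S. lo s x) \<and>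
                          (\<forall>y\<in>P. (\<forall>s\<in>S. lo s y) \<longrightarrow> lo x y))"

definition grid :: "nat \<Rightarrow> (nat \<Rightarrow> nat) \<Rightarrow> nat list set" where
  "grid n m = {x. length x = n \<and> (\<forall>i<n. x ! i < m i)}"

definition grid_le :: "nat list \<Rightarrow> nat list \<Rightarrow> bool" where
  "grid_le x y \<longleftrightarrow> length x = length y \<and> (\<forall>i<length x. x ! i \<le> y ! i)"

definition aligned_incl :: "nat \<Rightarrow> (nat \<Rightarrow> nat) \<Rightarrow> (nat \<Rightarrow> nat) \<Rightarrow> (nat \<Rightarrow> nat \<Rightarrow> nat) \<Rightarrow> bool" where
  "aligned_incl n k m \<iota> \<longleftrightarrow>
     (\<forall>i<n. strict_mono_on {0..<k i} (\<iota> i) \<and> \<iota> i ` {0..<k i} \<subseteq> {0..<m i})"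

definition grid_map :: "(nat \<Rightarrow> nat \<Rightarrow> nat) \<Rightarrow> nat list \<Rightarrow> nat list" where
  "grid_map \<iota> q = map (\<lambda>i. \<iota> i (q ! i)) [0..<length q]"

definition grid_floor :: "nat \<Rightarrow> (nat \<Rightarrow> nat) \<Rightarrow> (nat \<Rightarrow> nat \<Rightarrow> nat) \<Rightarrow> nat list \<Rightarrow> nat list" where
  "grid_floor n k \<iota> p = poset_join (grid n k) grid_le {q \<in> grid n k. grid_le (grid_map \<iota> q) p}"

definition lan_obj :: "('p \<Rightarrow> 'q) \<Rightarrow> ('q,'k) rep \<Rightarrow> ('p,'k) rep" where
  "lan_obj fl N = (\<lambda>p q. N (fl p) (fl q))"

definition lan_mor :: "('p \<Rightarrow> 'q) \<Rightarrow> ('q \<Rightarrow> 'k mat) \<Rightarrow> ('p \<Rightarrow> 'k mat)" where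
  "lan_mor fl g = (\<lambda>p. g (fl p))"

text \<open>C (with unit eta) is a left adjoint of the functor (F, Fm) : rep Q -> rep P,
  in the universal-arrow formulation: eta M : M -> F (C M) is universal.\<close>
definition is_left_adjoint ::
  "'p set \<Rightarrow> ('p \<Rightarrow> 'p \<Rightarrow> bool) \<Rightarrow> 'q set \<Rightarrow> ('q \<Rightarrow> 'q \<Rightarrow> bool)
   \<Rightarrow> (('q,'k::field) rep \<Rightarrow> ('p,'k) rep) \<Rightarrow> (('q \<Rightarrow> 'k mat) \<Rightarrow> ('p \<Rightarrow> 'k mat))
   \<Rightarrow> (('p,'k) rep \<Rightarrow> ('q,'k) rep) \<Rightarrow> (('p,'k) rep \<Rightarrow> 'p \<Rightarrow> 'k mat) \<Rightarrow> bool" where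
  "is_left_adjoint P leP Q leQ F Fm C \<eta> \<longleftrightarrow>
     (\<forall>M. is_rep P leP M \<longrightarrow>
        is_rep Q leQ (C M) \<and> rep_hom P leP M (F (C M)) (\<eta> M) \<and>
        (\<forall>N f. is_rep Q leQ N \<longrightarrow> rep_hom P leP M (F N) f \<longrightarrow>
           (\<exists>g. rep_hom Q leQ (C M) N g \<and> (\<forall>p\<in>P. Fm g p * \<eta> M p = f p) \<and>
              (\<forall>g'. rep_hom Q leQ (C M) N g' \<and> (\<forall>p\<in>P. Fm g' p * \<eta> M p = f p)
                    \<longrightarrow> (\<forall>q\<in>Q. g' q = g q)))))"

end

theory Submission
  imports Defs
begin

text \<open>
  Coordinatewise, the floor map of \<iota> has an upper adjoint; together these give a monotone
  r : Q \<rightarrow> P with (floor p \<le> q \<longleftrightarrow> p \<le> r q) and floor (r q) = q, the covering hypothesis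
  making floor defined everywhere. For such a Galois insertion, restriction C M = M \<circ> r is
  left adjoint to Lan = (-) \<circ> floor: the unit at p is the structure map of M along
  p \<le> r (floor p), and a morphism f : M \<rightarrow> N \<circ> floor transposes to f \<circ> r.
  Restriction takes the indicator of S to the indicator of the preimage of S under r, and by
  adjointness the preimage of the upset of A is the upset of floor(A); this gives the formula
  for C applied to an upset difference.
  Finally C commutes with direct sums, preimages of convex sets under monotone maps are convex,
  and the indicator of a convex set is the direct sum of the indicators of its zigzag components,
  so C preserves spread-decomposability.
\<close>

section \<open>Representations, morphisms and direct sums\<close>

lemma is_rep_id: "is_rep P lo M \<Longrightarrow> p \<in> P \<Longrightarrow> M p p = 1\<^sub>m (rdim M p)"
  by (simp add: is_rep_def)

lemma is_rep_carrier:
  "is_rep P lo M \<Longrightarrow> p \<in> P \<Longrightarrow> q \<in> P \<Longrightarrow> lo p q \<Longrightarrow> M p q \<in> carrier_mat (rdim M q) (rdim M p)"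
  by (simp add: is_rep_def)

lemma is_rep_comp:
  "is_rep P lo M \<Longrightarrow> p \<in> P \<Longrightarrow> q \<in> P \<Longrightarrow> s \<in> P \<Longrightarrow> lo p q \<Longrightarrow> lo q s \<Longrightarrow> M q s * M p q = M p s"
  by (simp add: is_rep_def)

lemma rep_hom_carrier: "rep_hom P lo M N f \<Longrightarrow> p \<in> P \<Longrightarrow> f p \<in> carrier_mat (rdim N p) (rdim M p)"
  by (simp add: rep_hom_def)

lemma rep_hom_commute:
  "rep_hom P lo M N f \<Longrightarrow> p \<in> P \<Longrightarrow> q \<in> P \<Longrightarrow> lo p q \<Longrightarrow> f q * M p q = N p q * f p"
  by (simp add: rep_hom_def)

lemma rep_hom_comp:
  assumes A: "is_rep P lo A" and B: "is_rep P lo B" and C: "is_rep P lo C"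
    and f: "rep_hom P lo A B f" and g: "rep_hom P lo B C g"
  shows "rep_hom P lo A C (\<lambda>p. g p * f p)"
  unfolding rep_hom_def
proof (intro conjI ballI impI)
  fix p assume "p \<in> P"
  then show "g p * f p \<in> carrier_mat (rdim C p) (rdim A p)"
    by (meson mult_carrier_mat rep_hom_carrier f g)
next
  fix p q assume pq: "p \<in> P" "q \<in> P" "lo p q"
  note A_pq = is_rep_carrier[OF A pq] and B_pq = is_rep_carrier[OF B pq]
    and C_pq = is_rep_carrier[OF C pq]
  have cf: "f p \<in> carrier_mat (rdim B p) (rdim A p)" "f q \<in> carrier_mat (rdim B q) (rdim A q)"
    and cg: "g p \<in> carrier_mat (rdim C p) (rdim B p)" "g q \<in> carrier_mat (rdim C q) (rdim B q)"
    using pq by (simp_all add: rep_hom_carrier[OF f] rep_hom_carrier[OF g])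
  have "g q * f q * A p q = g q * (f q * A p q)"
    by (rule assoc_mult_mat[OF cg(2) cf(2) A_pq])
  also have "\<dots> = (g q * B p q) * f p"
    by (simp add: rep_hom_commute[OF f pq] assoc_mult_mat[OF cg(2) B_pq cf(1)])
  also have "\<dots> = C p q * (g p * f p)"
    by (simp add: rep_hom_commute[OF g pq] assoc_mult_mat[OF C_pq cg(1) cf(1)])
  finally show "g q * f q * A p q = C p q * (g p * f p)" .
qed

lemma rep_iso_trans:
  assumes M: "is_rep P lo M" and N: "is_rep P lo N" and K: "is_rep P lo K"
    and MN: "rep_iso P lo M N" and NK: "rep_iso P lo N K"
  shows "rep_iso P lo M K"
proof -
  obtain f g where f: "rep_hom P lo M N f" and g: "rep_hom P lo N M g"
    and fg: "\<And>p. p \<in> P \<Longrightarrow> g p * f p = 1\<^sub>m (rdim M p) \<and> f p * g p = 1\<^sub>m (rdim N p)"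
    using MN unfolding rep_iso_def by blast
  obtain f' g' where f': "rep_hom P lo N K f'" and g': "rep_hom P lo K N g'"
    and fg': "\<And>p. p \<in> P \<Longrightarrow> g' p * f' p = 1\<^sub>m (rdim N p) \<and> f' p * g' p = 1\<^sub>m (rdim K p)"
    using NK unfolding rep_iso_def by blast
  have inverse: "(g p * g' p) * (f' p * f p) = 1\<^sub>m (rdim M p)"
    "(f' p * f p) * (g p * g' p) = 1\<^sub>m (rdim K p)" if p: "p \<in> P" for p
  proof -
    have c: "f p \<in> carrier_mat (rdim N p) (rdim M p)" "g p \<in> carrier_mat (rdim M p) (rdim N p)"
      "f' p \<in> carrier_mat (rdim K p) (rdim N p)" "g' p \<in> carrier_mat (rdim N p) (rdim K p)"
      using f g f' g' p by (auto intro: rep_hom_carrier)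
    have "(g p * g' p) * (f' p * f p) = g p * ((g' p * f' p) * f p)"
      using assoc_mult_mat[OF c(2) c(4) mult_carrier_mat[OF c(3) c(1)]]
        assoc_mult_mat[OF c(4) c(3) c(1)] by simp
    then show "(g p * g' p) * (f' p * f p) = 1\<^sub>m (rdim M p)"
      using c fg[OF p] fg'[OF p] by simp
    have "(f' p * f p) * (g p * g' p) = f' p * ((f p * g p) * g' p)"
      using assoc_mult_mat[OF c(3) c(1) mult_carrier_mat[OF c(2) c(4)]]
        assoc_mult_mat[OF c(1) c(2) c(4)] by simp
    then show "(f' p * f p) * (g p * g' p) = 1\<^sub>m (rdim K p)"
      using c fg[OF p] fg'[OF p] by simp
  qed
  show ?thesis unfolding rep_iso_def
    using rep_hom_comp[OF M N K f f'] rep_hom_comp[OF K N M g' g] inverse by blast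
qed

lemma rep_iso_if_eq_on_arrows:
  assumes M: "is_rep P lo M" and refl: "\<And>p. p \<in> P \<Longrightarrow> lo p p"
    and eq: "\<And>p q. p \<in> P \<Longrightarrow> q \<in> P \<Longrightarrow> lo p q \<Longrightarrow> M p q = N p q"
  shows "rep_iso P lo M N"
proof -
  have rdim_eq: "rdim N p = rdim M p" if "p \<in> P" for p
    using eq refl that by (simp add: rdim_def)
  have id_natural: "1\<^sub>m (rdim M q) * M p q = M p q * 1\<^sub>m (rdim M p)"
    if "p \<in> P" "q \<in> P" "lo p q" for p q
    using is_rep_carrier[OF M that] by simp
  have "rep_hom P lo M N (\<lambda>p. 1\<^sub>m (rdim M p))" "rep_hom P lo N M (\<lambda>p. 1\<^sub>m (rdim M p))"
    using rdim_eq eq id_natural unfolding rep_hom_def by auto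
  then show ?thesis
    unfolding rep_iso_def using rdim_eq by (intro exI) auto
qed

lemma rep_iso_refl: "is_rep P lo M \<Longrightarrow> (\<And>p. p \<in> P \<Longrightarrow> lo p p) \<Longrightarrow> rep_iso P lo M M"
  by (rule rep_iso_if_eq_on_arrows) auto

lemma four_block_diag_mult:
  fixes A1 :: "'k::field mat"
  assumes "A1 \<in> carrier_mat a b" "A2 \<in> carrier_mat b c" "B1 \<in> carrier_mat a' b'" "B2 \<in> carrier_mat b' c'"
  shows "four_block_mat A1 (0\<^sub>m a b') (0\<^sub>m a' b) B1 * four_block_mat A2 (0\<^sub>m b c') (0\<^sub>m b' c) B2
    = four_block_mat (A1 * A2) (0\<^sub>m a c') (0\<^sub>m a' c) (B1 * B2)"
proof -
  have "four_block_mat A1 (0\<^sub>m a b') (0\<^sub>m a' b) B1 * four_block_mat A2 (0\<^sub>m b c') (0\<^sub>m b' c) B2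
    = four_block_mat (A1 * A2 + 0\<^sub>m a b' * 0\<^sub>m b' c) (A1 * 0\<^sub>m b c' + 0\<^sub>m a b' * B2)
       (0\<^sub>m a' b * A2 + B1 * 0\<^sub>m b' c) (0\<^sub>m a' b * 0\<^sub>m b c' + B1 * B2)"
    using assms by (intro mult_four_block_mat) auto
  also have "\<dots> = four_block_mat (A1 * A2) (0\<^sub>m a c') (0\<^sub>m a' c) (B1 * B2)"
    using assms by simp
  finally show ?thesis .
qed

definition dsum2_rep :: "('p,'k::field) rep \<Rightarrow> ('p,'k) rep \<Rightarrow> ('p,'k) rep" where
  "dsum2_rep M N = (\<lambda>p q. four_block_mat (M p q) (0\<^sub>m (dim_row (M p q)) (dim_col (N p q)))
     (0\<^sub>m (dim_row (N p q)) (dim_col (M p q))) (N p q))"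

lemma dsum_rep_Cons: "dsum_rep (M # Ms) = dsum2_rep M (dsum_rep Ms)"
  by (simp add: dsum2_rep_def)

lemma rdim_dsum2_rep: "rdim (dsum2_rep M N) p = rdim M p + rdim N p"
  by (simp add: rdim_def dsum2_rep_def)

lemma dsum2_rep_apply:
  assumes "M p q \<in> carrier_mat a b" "N p q \<in> carrier_mat a' b'"
  shows "dsum2_rep M N p q = four_block_mat (M p q) (0\<^sub>m a b') (0\<^sub>m a' b) (N p q)"
  using assms by (simp add: dsum2_rep_def)

lemma dsum2_rep_cong:
  "M p q = M' p q \<Longrightarrow> N p q = N' p q \<Longrightarrow> dsum2_rep M N p q = dsum2_rep M' N' p q"
  by (simp add: dsum2_rep_def)

lemma dsum2_rep_assoc: "dsum2_rep A (dsum2_rep B C) = dsum2_rep (dsum2_rep A B) C"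
  unfolding dsum2_rep_def by (intro ext, rule assoc_four_block_mat)

lemma is_rep_dsum2_rep:
  assumes M: "is_rep P lo M" and N: "is_rep P lo N"
  shows "is_rep P lo (dsum2_rep M N)"
  unfolding is_rep_def
proof (intro conjI ballI impI)
  fix p assume "p \<in> P"
  then show "dsum2_rep M N p p = 1\<^sub>m (rdim (dsum2_rep M N) p)"
    by (simp only: rdim_dsum2_rep) (simp add: dsum2_rep_def is_rep_id[OF M] is_rep_id[OF N])
next
  fix p q assume pq: "p \<in> P" "q \<in> P" "lo p q"
  show "dsum2_rep M N p q \<in> carrier_mat (rdim (dsum2_rep M N) q) (rdim (dsum2_rep M N) p)"
    using is_rep_carrier[OF M pq] is_rep_carrier[OF N pq]
    by (simp add: dsum2_rep_apply rdim_dsum2_rep)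
next
  fix p q s assume pqs: "p \<in> P" "q \<in> P" "s \<in> P" "lo p q" "lo q s"
  have M_pq: "M p q \<in> carrier_mat (rdim M q) (rdim M p)"
    and M_qs: "M q s \<in> carrier_mat (rdim M s) (rdim M q)"
    and N_pq: "N p q \<in> carrier_mat (rdim N q) (rdim N p)"
    and N_qs: "N q s \<in> carrier_mat (rdim N s) (rdim N q)"
    using pqs by (simp_all add: is_rep_carrier[OF M] is_rep_carrier[OF N])
  have M_ps: "M p s = M q s * M p q" and N_ps: "N p s = N q s * N p q"
    using pqs by (simp_all add: is_rep_comp[OF M] is_rep_comp[OF N])
  show "dsum2_rep M N q s * dsum2_rep M N p q = dsum2_rep M N p s"
    unfolding dsum2_rep_apply[of M q s _ _ N, OF M_qs N_qs] dsum2_rep_apply[of M p q _ _ N, OF M_pq N_pq]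
      four_block_diag_mult[OF M_qs M_pq N_qs N_pq]
    using M_qs M_pq N_qs N_pq by (simp add: dsum2_rep_def M_ps N_ps)
qed

lemma rep_hom_dsum2_rep:
  assumes M: "is_rep P lo M" and M': "is_rep P lo M'" and N: "is_rep P lo N" and N': "is_rep P lo N'"
    and f: "rep_hom P lo M M' f" and g: "rep_hom P lo N N' g"
  shows "rep_hom P lo (dsum2_rep M N) (dsum2_rep M' N')
    (\<lambda>p. four_block_mat (f p) (0\<^sub>m (rdim M' p) (rdim N p)) (0\<^sub>m (rdim N' p) (rdim M p)) (g p))"
  unfolding rep_hom_def
proof (intro conjI ballI impI)
  fix p assume "p \<in> P"
  then show "four_block_mat (f p) (0\<^sub>m (rdim M' p) (rdim N p)) (0\<^sub>m (rdim N' p) (rdim M p)) (g p)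
      \<in> carrier_mat (rdim (dsum2_rep M' N') p) (rdim (dsum2_rep M N) p)"
    using rep_hom_carrier[OF f] rep_hom_carrier[OF g] by (simp add: rdim_dsum2_rep)
next
  fix p q assume pq: "p \<in> P" "q \<in> P" "lo p q"
  note M_pq = is_rep_carrier[OF M pq] and N_pq = is_rep_carrier[OF N pq]
    and M'_pq = is_rep_carrier[OF M' pq] and N'_pq = is_rep_carrier[OF N' pq]
  have f_p: "f p \<in> carrier_mat (rdim M' p) (rdim M p)" and f_q: "f q \<in> carrier_mat (rdim M' q) (rdim M q)"
    and g_p: "g p \<in> carrier_mat (rdim N' p) (rdim N p)" and g_q: "g q \<in> carrier_mat (rdim N' q) (rdim N q)"
    using pq by (simp_all add: rep_hom_carrier[OF f] rep_hom_carrier[OF g])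
  show "four_block_mat (f q) (0\<^sub>m (rdim M' q) (rdim N q)) (0\<^sub>m (rdim N' q) (rdim M q)) (g q)
      * dsum2_rep M N p q
    = dsum2_rep M' N' p q
      * four_block_mat (f p) (0\<^sub>m (rdim M' p) (rdim N p)) (0\<^sub>m (rdim N' p) (rdim M p)) (g p)"
    unfolding dsum2_rep_apply[of M p q _ _ N, OF M_pq N_pq] dsum2_rep_apply[of M' p q _ _ N', OF M'_pq N'_pq]
      four_block_diag_mult[OF f_q M_pq g_q N_pq] four_block_diag_mult[OF M'_pq f_p N'_pq g_p]
    by (simp add: rep_hom_commute[OF f pq] rep_hom_commute[OF g pq])
qed

lemma rep_iso_dsum2_rep:
  assumes M: "is_rep P lo M" and M': "is_rep P lo M'" and N: "is_rep P lo N" and N': "is_rep P lo N'"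
    and MM': "rep_iso P lo M M'" and NN': "rep_iso P lo N N'"
  shows "rep_iso P lo (dsum2_rep M N) (dsum2_rep M' N')"
proof -
  obtain f f' where f: "rep_hom P lo M M' f" and f': "rep_hom P lo M' M f'"
    and ff': "\<And>p. p \<in> P \<Longrightarrow> f' p * f p = 1\<^sub>m (rdim M p) \<and> f p * f' p = 1\<^sub>m (rdim M' p)"
    using MM' unfolding rep_iso_def by blast
  obtain g g' where g: "rep_hom P lo N N' g" and g': "rep_hom P lo N' N g'"
    and gg': "\<And>p. p \<in> P \<Longrightarrow> g' p * g p = 1\<^sub>m (rdim N p) \<and> g p * g' p = 1\<^sub>m (rdim N' p)"
    using NN' unfolding rep_iso_def by blast
  have inverse:
    "four_block_mat (f' p) (0\<^sub>m (rdim M p) (rdim N' p)) (0\<^sub>m (rdim N p) (rdim M' p)) (g' p) *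
      four_block_mat (f p) (0\<^sub>m (rdim M' p) (rdim N p)) (0\<^sub>m (rdim N' p) (rdim M p)) (g p)
      = 1\<^sub>m (rdim (dsum2_rep M N) p)"
    "four_block_mat (f p) (0\<^sub>m (rdim M' p) (rdim N p)) (0\<^sub>m (rdim N' p) (rdim M p)) (g p) *
      four_block_mat (f' p) (0\<^sub>m (rdim M p) (rdim N' p)) (0\<^sub>m (rdim N p) (rdim M' p)) (g' p)
      = 1\<^sub>m (rdim (dsum2_rep M' N') p)"
    if p: "p \<in> P" for p
  proof -
    have c: "f p \<in> carrier_mat (rdim M' p) (rdim M p)" "f' p \<in> carrier_mat (rdim M p) (rdim M' p)"
      "g p \<in> carrier_mat (rdim N' p) (rdim N p)" "g' p \<in> carrier_mat (rdim N p) (rdim N' p)"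
      using p by (simp_all add: rep_hom_carrier[OF f] rep_hom_carrier[OF f']
          rep_hom_carrier[OF g] rep_hom_carrier[OF g'])
    show "four_block_mat (f' p) (0\<^sub>m (rdim M p) (rdim N' p)) (0\<^sub>m (rdim N p) (rdim M' p)) (g' p) *
      four_block_mat (f p) (0\<^sub>m (rdim M' p) (rdim N p)) (0\<^sub>m (rdim N' p) (rdim M p)) (g p)
      = 1\<^sub>m (rdim (dsum2_rep M N) p)"
      using ff'[OF p] gg'[OF p] by (simp add: four_block_diag_mult[OF c(2) c(1) c(4) c(3)] rdim_dsum2_rep)
    show "four_block_mat (f p) (0\<^sub>m (rdim M' p) (rdim N p)) (0\<^sub>m (rdim N' p) (rdim M p)) (g p) *
      four_block_mat (f' p) (0\<^sub>m (rdim M p) (rdim N' p)) (0\<^sub>m (rdim N p) (rdim M' p)) (g' p)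
      = 1\<^sub>m (rdim (dsum2_rep M' N') p)"
      using ff'[OF p] gg'[OF p] by (simp add: four_block_diag_mult[OF c(1) c(2) c(3) c(4)] rdim_dsum2_rep)
  qed
  show ?thesis unfolding rep_iso_def
    using rep_hom_dsum2_rep[OF M M' N N' f g] rep_hom_dsum2_rep[OF M' M N' N f' g'] inverse by blast
qed

lemma rdim_indicator_rep: "rdim (indicator_rep S) p = (if p \<in> S then 1 else 0)"
  by (simp add: rdim_def indicator_rep_def)

lemma is_rep_indicator_rep:
  assumes "convex_in P lo S"
  shows "is_rep P lo (indicator_rep S :: ('p,'k::field) rep)"
  unfolding is_rep_def
proof (intro conjI ballI impI)
  fix p
  show "(indicator_rep S p p :: 'k mat) = 1\<^sub>m (rdim (indicator_rep S) p)"
    by (auto simp: indicator_rep_def rdim_def intro!: eq_matI)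
  fix q
  show "(indicator_rep S p q :: 'k mat) \<in> carrier_mat (rdim (indicator_rep S) q) (rdim (indicator_rep S) p)"
    by (simp only: rdim_indicator_rep) (simp add: indicator_rep_def)
  fix r assume "p \<in> P" "q \<in> P" "r \<in> P" "lo p q" "lo q r"
  then have "p \<in> S \<Longrightarrow> r \<in> S \<Longrightarrow> q \<in> S"
    using assms unfolding convex_in_def by blast
  then show "(indicator_rep S q r :: 'k mat) * indicator_rep S p q = indicator_rep S p r"
    by (auto simp: indicator_rep_def)
qed

lemma is_rep_dsum_rep: "(\<And>M. M \<in> set Ms \<Longrightarrow> is_rep P lo M) \<Longrightarrow> is_rep P lo (dsum_rep Ms)"
proof (induction Ms)
  case Nil
  show ?case by (auto simp: is_rep_def rdim_def intro!: eq_matI)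
next
  case (Cons M Ms)
  then show ?case unfolding dsum_rep_Cons by (intro is_rep_dsum2_rep) auto
qed

lemma is_rep_dsum_indicators:
  "\<forall>S\<in>set Ss. convex_in P lo S \<Longrightarrow> is_rep P lo (dsum_rep (map indicator_rep Ss) :: ('p,'k::field) rep)"
  by (rule is_rep_dsum_rep) (auto intro: is_rep_indicator_rep)

lemma dsum2_rep_indicator_empty: "dsum2_rep (indicator_rep {}) N = N"
  by (auto simp: fun_eq_iff dsum2_rep_def indicator_rep_def intro!: eq_matI)

section \<open>Convex indicator representations are spread-decomposable\<close>

lemma spread_decomposable_rep_iso:
  assumes M: "is_rep P lo M" and N: "is_rep P lo N"
    and MN: "rep_iso P lo M N" and N_dec: "spread_decomposable P lo N"
  shows "spread_decomposable P lo M"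
proof -
  obtain Ss where Ss: "\<forall>S\<in>set Ss. spread P lo S"
    and N_iso: "rep_iso P lo N (dsum_rep (map indicator_rep Ss))"
    using N_dec unfolding spread_decomposable_def by blast
  have "is_rep P lo (dsum_rep (map indicator_rep Ss))"
    using Ss by (intro is_rep_dsum_indicators) (simp add: spread_def)
  then show ?thesis
    unfolding spread_decomposable_def using Ss rep_iso_trans[OF M N _ MN N_iso] by blast
qed

lemma spread_decomposable_dsum2_rep_indicator:
  assumes refl: "\<And>p. p \<in> P \<Longrightarrow> lo p p" and S: "spread P lo S"
    and N: "is_rep P lo N" and N_dec: "spread_decomposable P lo N"
  shows "spread_decomposable P lo (dsum2_rep (indicator_rep S) N)"
proof -
  obtain Ss where Ss: "\<forall>S\<in>set Ss. spread P lo S"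
    and N_iso: "rep_iso P lo N (dsum_rep (map indicator_rep Ss))"
    using N_dec unfolding spread_decomposable_def by blast
  have S_rep: "is_rep P lo (indicator_rep S)"
    using S by (intro is_rep_indicator_rep) (simp add: spread_def)
  have "is_rep P lo (dsum_rep (map indicator_rep Ss))"
    using Ss by (intro is_rep_dsum_indicators) (simp add: spread_def)
  then have "rep_iso P lo (dsum2_rep (indicator_rep S) N) (dsum_rep (map indicator_rep (S # Ss)))"
    unfolding list.map dsum_rep_Cons
    using S_rep N refl N_iso by (intro rep_iso_dsum2_rep rep_iso_refl)
  then show ?thesis
    unfolding spread_decomposable_def using S Ss by (intro exI[of _ "S # Ss"]) simp
qed

definition comparable_in :: "('p \<Rightarrow> 'p \<Rightarrow> bool) \<Rightarrow> 'p set \<Rightarrow> 'p rel" where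
  "comparable_in lo X = {(a, b). a \<in> X \<and> b \<in> X \<and> (lo a b \<or> lo b a)}"

definition zigzag_component :: "('p \<Rightarrow> 'p \<Rightarrow> bool) \<Rightarrow> 'p set \<Rightarrow> 'p \<Rightarrow> 'p set" where
  "zigzag_component lo X x = {y \<in> X. (x, y) \<in> (comparable_in lo X)\<^sup>*}"

lemma sym_comparable_in_rtrancl: "sym ((comparable_in lo X)\<^sup>*)"
  by (rule sym_rtrancl) (auto simp: sym_def comparable_in_def)

lemma zigzag_component_subset: "zigzag_component lo X x \<subseteq> X"
  by (auto simp: zigzag_component_def)

lemma zigzag_component_incomparable:
  assumes "a \<in> zigzag_component lo X x" "b \<in> X - zigzag_component lo X x"
  shows "\<not> (lo a b \<or> lo b a)"
proof
  assume "lo a b \<or> lo b a"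
  then have "(a, b) \<in> comparable_in lo X"
    using assms by (auto simp: comparable_in_def zigzag_component_def)
  then show False
    using assms by (auto simp: zigzag_component_def intro: rtrancl_into_rtrancl)
qed

lemma spread_if_zigzag_component_eq:
  assumes "convex_in P lo X" "x \<in> X" "zigzag_component lo X x = X"
  shows "spread P lo X"
  unfolding spread_def zigzag_connected_def
proof (intro conjI ballI)
  fix y z assume "y \<in> X" "z \<in> X"
  then have xy: "(x, y) \<in> (comparable_in lo X)\<^sup>*" and xz: "(x, z) \<in> (comparable_in lo X)\<^sup>*"
    using assms(3) by (auto simp: zigzag_component_def)
  have "(y, x) \<in> (comparable_in lo X)\<^sup>*"
    using xy by (rule symD[OF sym_comparable_in_rtrancl])
  then show "(y, z) \<in> {(a, b). a \<in> X \<and> b \<in> X \<and> (lo a b \<or> lo b a)}\<^sup>*"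
    using xz unfolding comparable_in_def[symmetric] by (rule rtrancl_trans)
qed (use assms in auto)

lemma convex_in_separated_part:
  assumes X: "convex_in P lo X" and "Y \<subseteq> X"
    and separated: "\<And>a b. a \<in> Y \<Longrightarrow> b \<in> X - Y \<Longrightarrow> \<not> lo a b"
  shows "convex_in P lo Y"
  using assms unfolding convex_in_def by blast

lemma convex_in_zigzag_component:
  assumes "convex_in P lo X"
  shows "convex_in P lo (zigzag_component lo X x)"
proof (rule convex_in_separated_part[OF assms zigzag_component_subset])
  fix a b assume "a \<in> zigzag_component lo X x" "b \<in> X - zigzag_component lo X x"
  then show "\<not> lo a b" using zigzag_component_incomparable[of a lo X x b] by simp
qed

lemma convex_in_Diff_zigzag_component:
  assumes "convex_in P lo X"
  shows "convex_in P lo (X - zigzag_component lo X x)"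
proof (rule convex_in_separated_part[OF assms Diff_subset])
  fix a b assume "a \<in> X - zigzag_component lo X x" "b \<in> X - (X - zigzag_component lo X x)"
  then show "\<not> lo a b" using zigzag_component_incomparable[of b lo X x a] by simp
qed

lemma dsum2_rep_indicator_split:
  assumes "Y \<subseteq> X" and separated: "\<And>a b. a \<in> Y \<Longrightarrow> b \<in> X - Y \<Longrightarrow> \<not> (lo a b \<or> lo b a)"
    and "lo p q"
  shows "dsum2_rep (indicator_rep Y) (dsum2_rep (indicator_rep (X - Y)) D) p q
    = dsum2_rep (indicator_rep X) D p q"
proof -
  have "\<not> (p \<in> Y \<and> q \<in> X - Y)" "\<not> (p \<in> X - Y \<and> q \<in> Y)"
    using separated \<open>lo p q\<close> by blast+
  then have "dsum2_rep (indicator_rep Y) (indicator_rep (X - Y)) p q = indicator_rep X p q"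
    using \<open>Y \<subseteq> X\<close> by (auto simp: dsum2_rep_def indicator_rep_def intro!: eq_matI)
  then show ?thesis
    unfolding dsum2_rep_assoc by (rule dsum2_rep_cong) simp
qed

lemma card_square_split_less:
  assumes "finite X" "Y \<subseteq> X" "Y \<noteq> {}" "X - Y \<noteq> {}"
  shows "card Y * card Y + card (X - Y) * card (X - Y) + 1 < card X * card X"
proof -
  have "card X = card Y + card (X - Y)"
    using assms(1,2) by (simp add: card_Diff_subset card_mono finite_subset)
  moreover have "card Y * card (X - Y) > 0"
    using assms by (auto simp: card_gt_0_iff intro: finite_subset)
  ultimately show ?thesis by (simp only: algebra_simps)
qed

lemma spread_decomposable_dsum_convex:
  assumes fin: "finite P" and refl: "\<And>p. p \<in> P \<Longrightarrow> lo p p"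
  shows "\<forall>X\<in>set Xs. convex_in P lo X \<Longrightarrow>
    spread_decomposable P lo (dsum_rep (map indicator_rep Xs) :: ('p,'k::field) rep)"
  \<comment> \<open>Splitting off a zigzag component of X lowers the sum of squared cardinalities by at least 2,
    which pays for the extra list entry.\<close>
proof (induction "\<Sum>X\<leftarrow>Xs. card X * card X + 1" arbitrary: Xs rule: less_induct)
  case less
  show ?case
  proof (cases Xs)
    case Nil
    have "rep_iso P lo (dsum_rep [] :: ('p,'k) rep) (dsum_rep [])"
      using is_rep_dsum_indicators[of "[]"] refl by (intro rep_iso_refl) auto
    then show ?thesis unfolding spread_decomposable_def Nil by (intro exI[of _ "[]"]) simp
  next
    case (Cons X Ys)
    have X: "convex_in P lo X" and Ys: "\<forall>Y\<in>set Ys. convex_in P lo Y"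
      using less.prems Cons by auto
    let ?D = "dsum_rep (map indicator_rep Ys) :: ('p,'k) rep"
    have D: "is_rep P lo ?D" using Ys by (rule is_rep_dsum_indicators)
    have D_dec: "spread_decomposable P lo ?D" using less.hyps[OF _ Ys] Cons by simp
    consider "X = {}" | x where "x \<in> X" "zigzag_component lo X x = X"
      | x where "x \<in> X" "zigzag_component lo X x \<noteq> X" by blast
    then show ?thesis
    proof cases
      case 1
      show ?thesis
        unfolding Cons list.map dsum_rep_Cons 1 dsum2_rep_indicator_empty by (rule D_dec)
    next
      case (2 x)
      then have "spread P lo X" using X by (intro spread_if_zigzag_component_eq)
      then show ?thesis
        unfolding Cons list.map dsum_rep_Cons using refl D D_dec by (intro spread_decomposable_dsum2_rep_indicator)
    next
      case (3 x)
      define Y where "Y = zigzag_component lo X x"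
      let ?Zs = "Y # (X - Y) # Ys"
      have Y: "Y \<subseteq> X" "Y \<noteq> {}" "X - Y \<noteq> {}"
        using 3 zigzag_component_subset[of lo X x] by (auto simp: Y_def zigzag_component_def)
      have separated: "\<not> (lo a b \<or> lo b a)" if "a \<in> Y" "b \<in> X - Y" for a b
        using that unfolding Y_def by (rule zigzag_component_incomparable)
      have convex: "\<forall>Z\<in>set ?Zs. convex_in P lo Z"
        using X Ys by (simp add: Y_def convex_in_zigzag_component convex_in_Diff_zigzag_component)
      have "finite X" using X fin finite_subset by (auto simp: convex_in_def)
      then have "(\<Sum>Z\<leftarrow>?Zs. card Z * card Z + 1) < (\<Sum>Z\<leftarrow>Xs. card Z * card Z + 1)"
        using card_square_split_less[OF _ Y] Cons by simp
      then have Zs_dec: "spread_decomposable P lo (dsum_rep (map indicator_rep ?Zs) :: ('p,'k) rep)"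
        using convex by (rule less.hyps)
      have "rep_iso P lo (dsum_rep (map indicator_rep Xs)) (dsum_rep (map indicator_rep ?Zs) :: ('p,'k) rep)"
      proof (rule rep_iso_if_eq_on_arrows[OF is_rep_dsum_indicators[OF less.prems] refl])
        fix p q assume "lo p q"
        with Y(1) separated
        have "dsum2_rep (indicator_rep Y) (dsum2_rep (indicator_rep (X - Y)) ?D) p q
            = dsum2_rep (indicator_rep X) ?D p q"
          by (rule dsum2_rep_indicator_split)
        then show "dsum_rep (map indicator_rep Xs) p q = (dsum_rep (map indicator_rep ?Zs) p q :: 'k mat)"
          unfolding Cons list.map dsum_rep_Cons ..
      qed
      then show ?thesis
        using spread_decomposable_rep_iso[OF is_rep_dsum_indicators[OF less.prems]
            is_rep_dsum_indicators[OF convex] _ Zs_dec] by blast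
    qed
  qed
qed

section \<open>Restriction along a monotone map\<close>

definition pullback_rep :: "('q \<Rightarrow> 'p) \<Rightarrow> ('p,'k) rep \<Rightarrow> ('q,'k) rep" where
  "pullback_rep r M = (\<lambda>q q'. M (r q) (r q'))"

lemma rdim_pullback_rep: "rdim (pullback_rep r M) q = rdim M (r q)"
  by (simp add: rdim_def pullback_rep_def)

lemma rdim_lan_obj: "rdim (lan_obj fl N) p = rdim N (fl p)"
  by (simp add: rdim_def lan_obj_def)

locale monotone_map =
  fixes P :: "'p set" and leP :: "'p \<Rightarrow> 'p \<Rightarrow> bool"
    and Q :: "'q set" and leQ :: "'q \<Rightarrow> 'q \<Rightarrow> bool" and r :: "'q \<Rightarrow> 'p"
  assumes map_closed: "q \<in> Q \<Longrightarrow> r q \<in> P"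
    and map_mono: "q \<in> Q \<Longrightarrow> q' \<in> Q \<Longrightarrow> leQ q q' \<Longrightarrow> leP (r q) (r q')"
begin

lemma is_rep_pullback_rep: "is_rep P leP M \<Longrightarrow> is_rep Q leQ (pullback_rep r M)"
  unfolding is_rep_def rdim_pullback_rep by (simp add: pullback_rep_def map_closed map_mono)

lemma rep_hom_pullback_rep:
  "rep_hom P leP M N f \<Longrightarrow> rep_hom Q leQ (pullback_rep r M) (pullback_rep r N) (\<lambda>q. f (r q))"
  unfolding rep_hom_def rdim_pullback_rep by (simp add: pullback_rep_def map_closed map_mono)

lemma rep_iso_pullback_rep:
  assumes "rep_iso P leP M N"
  shows "rep_iso Q leQ (pullback_rep r M) (pullback_rep r N)"
proof -
  obtain f g where "rep_hom P leP M N f" "rep_hom P leP N M g"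
    and inverse: "\<forall>p\<in>P. g p * f p = 1\<^sub>m (rdim M p) \<and> f p * g p = 1\<^sub>m (rdim N p)"
    using assms unfolding rep_iso_def by blast
  then show ?thesis
    unfolding rep_iso_def rdim_pullback_rep using map_closed
    by (intro exI[of _ "\<lambda>q. f (r q)"] exI[of _ "\<lambda>q. g (r q)"]) (simp add: rep_hom_pullback_rep)
qed

lemma pullback_rep_indicator_rep:
  "q \<in> Q \<Longrightarrow> q' \<in> Q \<Longrightarrow> pullback_rep r (indicator_rep S) q q' = indicator_rep {x \<in> Q. r x \<in> S} q q'"
  by (simp add: pullback_rep_def indicator_rep_def)

lemma pullback_rep_dsum_indicators:
  assumes "q \<in> Q" "q' \<in> Q"
  shows "pullback_rep r (dsum_rep (map indicator_rep Ss)) q q'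
    = dsum_rep (map indicator_rep (map (\<lambda>S. {x \<in> Q. r x \<in> S}) Ss)) q q'"
  using assms by (induction Ss) (simp_all add: pullback_rep_def indicator_rep_def)

lemma convex_in_preimage: "convex_in P leP S \<Longrightarrow> convex_in Q leQ {x \<in> Q. r x \<in> S}"
  unfolding convex_in_def using map_closed map_mono by blast

lemma spread_decomposable_pullback_rep:
  assumes fin: "finite Q" and reflQ: "\<And>q. q \<in> Q \<Longrightarrow> leQ q q"
    and M: "is_rep P leP M" and M_dec: "spread_decomposable P leP M"
  shows "spread_decomposable Q leQ (pullback_rep r M)"
proof -
  obtain Ss where Ss: "\<forall>S\<in>set Ss. spread P leP S"
    and M_iso: "rep_iso P leP M (dsum_rep (map indicator_rep Ss))"
    using M_dec unfolding spread_decomposable_def by blast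
  let ?D = "dsum_rep (map indicator_rep Ss)"
  let ?Xs = "map (\<lambda>S. {x \<in> Q. r x \<in> S}) Ss"
  have D: "is_rep P leP ?D"
    using Ss by (intro is_rep_dsum_indicators) (simp add: spread_def)
  have Xs: "\<forall>X\<in>set ?Xs. convex_in Q leQ X"
    using Ss by (auto simp: spread_def intro: convex_in_preimage)
  have "rep_iso Q leQ (pullback_rep r ?D) (dsum_rep (map indicator_rep ?Xs))"
  proof (rule rep_iso_if_eq_on_arrows[OF is_rep_pullback_rep[OF D] reflQ])
    fix q q' assume "q \<in> Q" "q' \<in> Q"
    then show "pullback_rep r ?D q q' = dsum_rep (map indicator_rep ?Xs) q q'"
      by (rule pullback_rep_dsum_indicators)
  qed
  then have "spread_decomposable Q leQ (pullback_rep r ?D)"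
    using spread_decomposable_dsum_convex[of Q leQ, OF fin reflQ Xs]
    by (rule spread_decomposable_rep_iso[OF is_rep_pullback_rep[OF D] is_rep_dsum_indicators[OF Xs]])
  then show ?thesis
    by (rule spread_decomposable_rep_iso[OF is_rep_pullback_rep[OF M] is_rep_pullback_rep[OF D]
          rep_iso_pullback_rep[OF M_iso]])
qed

end

lemma convex_in_upset_diff:
  assumes trans: "\<And>x y z. x \<in> P \<Longrightarrow> y \<in> P \<Longrightarrow> z \<in> P \<Longrightarrow> lo x y \<Longrightarrow> lo y z \<Longrightarrow> lo x z"
    and "A \<subseteq> P" "B \<subseteq> P"
  shows "convex_in P lo (upset P lo A - upset P lo B)"
  unfolding convex_in_def
proof (intro conjI ballI impI)
  fix a b c assume a: "a \<in> upset P lo A - upset P lo B" and b: "b \<in> P"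
    and c: "c \<in> upset P lo A - upset P lo B" and "lo a b" "lo b c"
  then have "b \<in> upset P lo A" and "b \<notin> upset P lo B"
    using trans \<open>A \<subseteq> P\<close> \<open>B \<subseteq> P\<close> unfolding upset_def by blast+
  then show "b \<in> upset P lo A - upset P lo B" by blast
qed (auto simp: upset_def)

section \<open>Restriction along an upper adjoint is a left adjoint\<close>

locale galois_insertion =
  fixes P :: "'p set" and leP :: "'p \<Rightarrow> 'p \<Rightarrow> bool"
    and Q :: "'q set" and leQ :: "'q \<Rightarrow> 'q \<Rightarrow> bool"
    and fl :: "'p \<Rightarrow> 'q" and r :: "'q \<Rightarrow> 'p"
  assumes fl_closed: "p \<in> P \<Longrightarrow> fl p \<in> Q"
    and r_closed: "q \<in> Q \<Longrightarrow> r q \<in> P"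
    and adjunction: "p \<in> P \<Longrightarrow> q \<in> Q \<Longrightarrow> leQ (fl p) q \<longleftrightarrow> leP p (r q)"
    and fl_r: "q \<in> Q \<Longrightarrow> fl (r q) = q"
    and transP: "p \<in> P \<Longrightarrow> p' \<in> P \<Longrightarrow> p'' \<in> P \<Longrightarrow> leP p p' \<Longrightarrow> leP p' p'' \<Longrightarrow> leP p p''"
    and reflQ: "q \<in> Q \<Longrightarrow> leQ q q"
begin

lemma r_mono: "q \<in> Q \<Longrightarrow> q' \<in> Q \<Longrightarrow> leQ q q' \<Longrightarrow> leP (r q) (r q')"
  using adjunction[OF r_closed] fl_r by simp

sublocale monotone_map P leP Q leQ r
  by unfold_locales (simp_all add: r_closed r_mono)

lemma le_r_fl: "p \<in> P \<Longrightarrow> leP p (r (fl p))"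
  using adjunction[OF _ fl_closed] reflQ fl_closed by blast

lemma fl_mono: "p \<in> P \<Longrightarrow> p' \<in> P \<Longrightarrow> leP p p' \<Longrightarrow> leQ (fl p) (fl p')"
  using adjunction[OF _ fl_closed] transP[OF _ _ r_closed[OF fl_closed]] le_r_fl by blast

lemma rep_hom_unit:
  assumes M: "is_rep P leP M"
  shows "rep_hom P leP M (lan_obj fl (pullback_rep r M)) (\<lambda>p. M p (r (fl p)))"
  unfolding rep_hom_def rdim_lan_obj rdim_pullback_rep
proof (intro conjI ballI impI)
  fix p assume "p \<in> P"
  then show "M p (r (fl p)) \<in> carrier_mat (rdim M (r (fl p))) (rdim M p)"
    by (intro is_rep_carrier[OF M] r_closed fl_closed le_r_fl)
next
  fix p p' assume p: "p \<in> P" and p': "p' \<in> P" and le: "leP p p'"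
  have rp: "r (fl p) \<in> P" and rp': "r (fl p') \<in> P"
    using p p' by (simp_all add: r_closed fl_closed)
  have "M p' (r (fl p')) * M p p' = M p (r (fl p'))"
    using is_rep_comp[OF M p p' rp' le le_r_fl[OF p']] .
  also have "\<dots> = M (r (fl p)) (r (fl p')) * M p (r (fl p))"
    using is_rep_comp[OF M p rp rp' le_r_fl[OF p] r_mono[OF fl_closed[OF p] fl_closed[OF p'] fl_mono[OF p p' le]]]
    by simp
  finally show "M p' (r (fl p')) * M p p' = lan_obj fl (pullback_rep r M) p p' * M p (r (fl p))"
    by (simp add: lan_obj_def pullback_rep_def)
qed

lemma rep_hom_transpose:
  assumes f: "rep_hom P leP M (lan_obj fl N) f"
  shows "rep_hom Q leQ (pullback_rep r M) N (\<lambda>q. f (r q))"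
  unfolding rep_hom_def rdim_pullback_rep
proof (intro conjI ballI impI)
  fix q assume "q \<in> Q"
  then show "f (r q) \<in> carrier_mat (rdim N q) (rdim M (r q))"
    using rep_hom_carrier[OF f r_closed] by (simp add: rdim_lan_obj fl_r)
next
  fix q q' assume q: "q \<in> Q" and q': "q' \<in> Q" and le: "leQ q q'"
  show "f (r q') * pullback_rep r M q q' = N q q' * f (r q)"
    using rep_hom_commute[OF f r_closed[OF q] r_closed[OF q'] r_mono[OF q q' le]]
    by (simp add: pullback_rep_def lan_obj_def fl_r q q')
qed

lemma transpose_factorization:
  assumes N: "is_rep Q leQ N" and f: "rep_hom P leP M (lan_obj fl N) f" and p: "p \<in> P"
  shows "lan_mor fl (\<lambda>q. f (r q)) p * M p (r (fl p)) = f p"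
proof -
  have fp: "fl p \<in> Q" and rp: "r (fl p) \<in> P" using p by (simp_all add: fl_closed r_closed)
  have "lan_mor fl (\<lambda>q. f (r q)) p * M p (r (fl p)) = N (fl p) (fl (r (fl p))) * f p"
    using rep_hom_commute[OF f p rp le_r_fl[OF p]] by (simp add: lan_mor_def lan_obj_def)
  also have "\<dots> = f p"
    using rep_hom_carrier[OF f p] by (simp add: fl_r[OF fp] is_rep_id[OF N fp] rdim_lan_obj)
  finally show ?thesis .
qed

lemma transpose_unique:
  assumes M: "is_rep P leP M" and g: "rep_hom Q leQ (pullback_rep r M) N g"
    and factor: "\<forall>p\<in>P. lan_mor fl g p * M p (r (fl p)) = f p" and q: "q \<in> Q"
  shows "g q = f (r q)"
proof -
  have rq: "r q \<in> P" using q by (rule r_closed)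
  have "g q * M (r q) (r q) = f (r q)"
    using factor[rule_format, OF rq] by (simp add: lan_mor_def fl_r[OF q])
  then show ?thesis
    using rep_hom_carrier[OF g q] by (simp add: is_rep_id[OF M rq] rdim_pullback_rep)
qed

lemma is_left_adjoint_pullback_rep:
  "is_left_adjoint P leP Q leQ (lan_obj fl) (lan_mor fl) (pullback_rep r) (\<lambda>M p. M p (r (fl p)))"
  unfolding is_left_adjoint_def
proof (intro allI impI conjI)
  fix M :: "('p, 'k::field) rep" assume M: "is_rep P leP M"
  show "is_rep Q leQ (pullback_rep r M)" using M by (rule is_rep_pullback_rep)
  show "rep_hom P leP M (lan_obj fl (pullback_rep r M)) (\<lambda>p. M p (r (fl p)))"
    using M by (rule rep_hom_unit)
  fix N f assume N: "is_rep Q leQ N" and f: "rep_hom P leP M (lan_obj fl N) f"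
  show "\<exists>g. rep_hom Q leQ (pullback_rep r M) N g
      \<and> (\<forall>p\<in>P. lan_mor fl g p * M p (r (fl p)) = f p)
      \<and> (\<forall>g'. rep_hom Q leQ (pullback_rep r M) N g' \<and> (\<forall>p\<in>P. lan_mor fl g' p * M p (r (fl p)) = f p)
          \<longrightarrow> (\<forall>q\<in>Q. g' q = g q))"
    using rep_hom_transpose[OF f] transpose_factorization[OF N f] transpose_unique[OF M]
    by (intro exI[of _ "\<lambda>q. f (r q)"]) blast
qed

lemma preimage_upset: "A \<subseteq> P \<Longrightarrow> {q \<in> Q. r q \<in> upset P leP A} = upset Q leQ (fl ` A)"
  unfolding upset_def using adjunction fl_closed r_closed by blast

lemma rep_iso_pullback_indicator_upset_diff:
  assumes "A \<subseteq> P" "B \<subseteq> P"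
  shows "rep_iso Q leQ (pullback_rep r (indicator_rep (upset P leP A - upset P leP B)))
    (indicator_rep (upset Q leQ (fl ` A) - upset Q leQ (fl ` B)) :: ('q, 'k::field) rep)"
proof (rule rep_iso_if_eq_on_arrows)
  show "is_rep Q leQ (pullback_rep r (indicator_rep (upset P leP A - upset P leP B)) :: ('q, 'k) rep)"
    using transP assms by (intro is_rep_pullback_rep is_rep_indicator_rep convex_in_upset_diff)
  have preimage: "{q \<in> Q. r q \<in> upset P leP A - upset P leP B}
      = upset Q leQ (fl ` A) - upset Q leQ (fl ` B)"
    using preimage_upset[OF assms(1)] preimage_upset[OF assms(2)] by blast
  show "pullback_rep r (indicator_rep (upset P leP A - upset P leP B)) q q'
      = (indicator_rep (upset Q leQ (fl ` A) - upset Q leQ (fl ` B)) q q' :: 'k mat)"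
    if "q \<in> Q" "q' \<in> Q" for q q'
    unfolding pullback_rep_indicator_rep[OF that] preimage ..
qed (rule reflQ)

end

section \<open>The floor map of an aligned grid inclusion\<close>

lemma grid_le_refl: "grid_le x x"
  by (simp add: grid_le_def)

lemma grid_le_trans: "grid_le x y \<Longrightarrow> grid_le y z \<Longrightarrow> grid_le x z"
  unfolding grid_le_def by (metis order_trans)

lemma grid_le_antisym: "grid_le x y \<Longrightarrow> grid_le y x \<Longrightarrow> x = y"
  by (auto simp: grid_le_def intro!: nth_equalityI intro: antisym)

lemma finite_grid: "finite (grid n k)"
proof (rule finite_subset)
  show "grid n k \<subseteq> {xs. set xs \<subseteq> (\<Union>i<n. {..<k i}) \<and> length xs = n}"
    by (force simp: grid_def in_set_conv_nth)
  show "finite {xs. set xs \<subseteq> (\<Union>i<n. {..<k i}) \<and> length xs = n}"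
    by (intro finite_lists_length_eq) auto
qed

lemma poset_join_eq_greatest:
  assumes antisym: "\<And>x y. x \<in> P \<Longrightarrow> y \<in> P \<Longrightarrow> lo x y \<Longrightarrow> lo y x \<Longrightarrow> x = y"
    and "g \<in> P" "g \<in> S" "\<forall>s\<in>S. lo s g"
  shows "poset_join P lo S = g"
  unfolding poset_join_def
proof (rule the_equality)
  show "g \<in> P \<and> (\<forall>s\<in>S. lo s g) \<and> (\<forall>y\<in>P. (\<forall>s\<in>S. lo s y) \<longrightarrow> lo g y)"
    using assms by blast
  fix x assume "x \<in> P \<and> (\<forall>s\<in>S. lo s x) \<and> (\<forall>y\<in>P. (\<forall>s\<in>S. lo s y) \<longrightarrow> lo x y)"
  then show "x = g" using assms by blast
qed

text \<open>GREATEST gives a junk value when no j < K has \<phi> j \<le> x; the covering hypothesis of the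
  main theorem rules this out.\<close>

definition chain_floor :: "(nat \<Rightarrow> nat) \<Rightarrow> nat \<Rightarrow> nat \<Rightarrow> nat" where
  "chain_floor \<phi> K x = (GREATEST j. j < K \<and> \<phi> j \<le> x)"

text \<open>The largest x < M whose floor is y: just below \<phi> (y + 1), or the top of the chain.\<close>

definition chain_floor_radj :: "(nat \<Rightarrow> nat) \<Rightarrow> nat \<Rightarrow> nat \<Rightarrow> nat \<Rightarrow> nat" where
  "chain_floor_radj \<phi> K M y = (if Suc y < K then \<phi> (Suc y) - 1 else M - 1)"

lemma
  fixes \<phi> :: "nat \<Rightarrow> nat"
  assumes "j0 < K" "\<phi> j0 \<le> x"
  shows chain_floor_less: "chain_floor \<phi> K x < K"
    and chain_floor_le: "\<phi> (chain_floor \<phi> K x) \<le> x"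
    and le_chain_floor: "j < K \<Longrightarrow> \<phi> j \<le> x \<Longrightarrow> j \<le> chain_floor \<phi> K x"
proof -
  have bounded: "\<And>j. j < K \<and> \<phi> j \<le> x \<Longrightarrow> j \<le> K" by simp
  show "chain_floor \<phi> K x < K" "\<phi> (chain_floor \<phi> K x) \<le> x"
    using GreatestI_nat[of "\<lambda>j. j < K \<and> \<phi> j \<le> x", OF _ bounded] assms
    by (auto simp: chain_floor_def)
  show "j < K \<Longrightarrow> \<phi> j \<le> x \<Longrightarrow> j \<le> chain_floor \<phi> K x"
    using Greatest_le_nat[of "\<lambda>j. j < K \<and> \<phi> j \<le> x", OF _ bounded] by (simp add: chain_floor_def)
qed

lemma chain_floor_le_iff:
  fixes \<phi> :: "nat \<Rightarrow> nat"
  assumes sm: "strict_mono_on {0..<K} \<phi>" and "x < M" "y < K" and j0: "j0 < K" "\<phi> j0 \<le> x"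
  shows "chain_floor \<phi> K x \<le> y \<longleftrightarrow> x \<le> chain_floor_radj \<phi> K M y"
proof
  assume le: "chain_floor \<phi> K x \<le> y"
  show "x \<le> chain_floor_radj \<phi> K M y"
  proof (cases "Suc y < K")
    case True
    then have "\<not> \<phi> (Suc y) \<le> x" using le le_chain_floor[where \<phi>=\<phi>, OF j0, of "Suc y"] by linarith
    then show ?thesis using True by (simp add: chain_floor_radj_def)
  qed (use \<open>x < M\<close> in \<open>simp add: chain_floor_radj_def\<close>)
next
  assume le: "x \<le> chain_floor_radj \<phi> K M y"
  show "chain_floor \<phi> K x \<le> y"
  proof (rule ccontr)
    assume "\<not> chain_floor \<phi> K x \<le> y"
    then have "Suc y \<le> chain_floor \<phi> K x" by simp
    moreover note chain_floor_less[where \<phi>=\<phi>, OF j0] chain_floor_le[where \<phi>=\<phi>, OF j0]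
    ultimately have "Suc y < K" "\<phi> (Suc y) \<le> x"
      using strict_mono_on_less_eq[OF sm, of "Suc y" "chain_floor \<phi> K x"] by auto
    moreover have "\<phi> y < \<phi> (Suc y)"
      using strict_mono_onD[OF sm, of y "Suc y"] \<open>Suc y < K\<close> by simp
    ultimately show False using le by (simp add: chain_floor_radj_def)
  qed
qed

lemma chain_floor_radj_less:
  fixes \<phi> :: "nat \<Rightarrow> nat"
  assumes bound: "\<And>j. j < K \<Longrightarrow> \<phi> j < M" and "y < K"
  shows "chain_floor_radj \<phi> K M y < M"
  using bound[of y] bound[of "Suc y"] \<open>y < K\<close> by (auto simp: chain_floor_radj_def)

lemma le_chain_floor_radj:
  fixes \<phi> :: "nat \<Rightarrow> nat"
  assumes sm: "strict_mono_on {0..<K} \<phi>" and bound: "\<And>j. j < K \<Longrightarrow> \<phi> j < M" and "y < K"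
  shows "\<phi> y \<le> chain_floor_radj \<phi> K M y"
  using strict_mono_onD[OF sm, of y "Suc y"] bound[of y] \<open>y < K\<close> by (auto simp: chain_floor_radj_def)

lemma chain_floor_chain_floor_radj:
  fixes \<phi> :: "nat \<Rightarrow> nat"
  assumes sm: "strict_mono_on {0..<K} \<phi>" and bound: "\<And>j. j < K \<Longrightarrow> \<phi> j < M" and y: "y < K"
  shows "chain_floor \<phi> K (chain_floor_radj \<phi> K M y) = y"
proof -
  note bounds = chain_floor_radj_less[OF bound y] le_chain_floor_radj[OF sm bound y]
  show ?thesis
    using chain_floor_le_iff[OF sm bounds(1) y y bounds(2)]
      le_chain_floor[where \<phi>=\<phi>, OF y bounds(2) y bounds(2)] by simp
qed

definition grid_floor_radj ::
  "nat \<Rightarrow> (nat \<Rightarrow> nat) \<Rightarrow> (nat \<Rightarrow> nat) \<Rightarrow> (nat \<Rightarrow> nat \<Rightarrow> nat) \<Rightarrow> nat list \<Rightarrow> nat list" where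
  "grid_floor_radj n k m \<iota> q = map (\<lambda>i. chain_floor_radj (\<iota> i) (k i) (m i) (q ! i)) [0..<n]"

context
  fixes n :: nat and m k :: "nat \<Rightarrow> nat" and \<iota> :: "nat \<Rightarrow> nat \<Rightarrow> nat"
  assumes aligned: "aligned_incl n k m \<iota>"
    and covering: "upset (grid n m) grid_le (grid_map \<iota> ` grid n k) = grid n m"
begin

lemma aligned_strict_mono: "i < n \<Longrightarrow> strict_mono_on {0..<k i} (\<iota> i)"
  using aligned by (simp add: aligned_incl_def)

lemma aligned_bound: "i < n \<Longrightarrow> j < k i \<Longrightarrow> \<iota> i j < m i"
  using aligned unfolding aligned_incl_def by (meson atLeastLessThan_iff image_subset_iff zero_le)

lemma covering_coord:
  assumes "p \<in> grid n m" "i < n"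
  obtains j0 where "j0 < k i" "\<iota> i j0 \<le> p ! i"
proof -
  obtain q where "q \<in> grid n k" "grid_le (grid_map \<iota> q) p"
    using covering assms(1) unfolding upset_def by blast
  then show ?thesis
    using that assms(2) by (auto simp: grid_def grid_le_def grid_map_def)
qed

lemma chain_floor_coord:
  assumes "p \<in> grid n m" "i < n"
  shows "chain_floor (\<iota> i) (k i) (p ! i) < k i"
    and "\<iota> i (chain_floor (\<iota> i) (k i) (p ! i)) \<le> p ! i"
    and "j < k i \<Longrightarrow> \<iota> i j \<le> p ! i \<Longrightarrow> j \<le> chain_floor (\<iota> i) (k i) (p ! i)"
  by (rule covering_coord[OF assms];
      simp add: chain_floor_less[where \<phi>="\<iota> i"] chain_floor_le[where \<phi>="\<iota> i"]
        le_chain_floor[where \<phi>="\<iota> i"])+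

lemma grid_floor_eq:
  assumes p: "p \<in> grid n m"
  shows "grid_floor n k \<iota> p = map (\<lambda>i. chain_floor (\<iota> i) (k i) (p ! i)) [0..<n]"
proof -
  let ?f = "map (\<lambda>i. chain_floor (\<iota> i) (k i) (p ! i)) [0..<n]"
  note coord = chain_floor_coord[OF p]
  have lp: "length p = n" using p by (simp add: grid_def)
  have "?f \<in> grid n k" using coord by (simp add: grid_def)
  moreover have "grid_le (grid_map \<iota> ?f) p" using coord lp by (simp add: grid_le_def grid_map_def)
  moreover have "grid_le q ?f" if "q \<in> grid n k" "grid_le (grid_map \<iota> q) p" for q
    using that coord lp by (auto simp: grid_def grid_le_def grid_map_def)
  ultimately show ?thesis
    unfolding grid_floor_def by (intro poset_join_eq_greatest) (auto intro: grid_le_antisym)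
qed

lemma galois_insertion_grid:
  "galois_insertion (grid n m) grid_le (grid n k) grid_le (grid_floor n k \<iota>) (grid_floor_radj n k m \<iota>)"
proof (unfold_locales)
  fix p assume "p \<in> grid n m"
  then show "grid_floor n k \<iota> p \<in> grid n k"
    using chain_floor_coord(1) by (simp add: grid_floor_eq grid_def)
next
  fix q assume "q \<in> grid n k"
  then show "grid_floor_radj n k m \<iota> q \<in> grid n m"
    using chain_floor_radj_less aligned_bound by (simp add: grid_floor_radj_def grid_def)
next
  fix p q assume p: "p \<in> grid n m" and q: "q \<in> grid n k"
  have "chain_floor (\<iota> i) (k i) (p ! i) \<le> q ! i \<longleftrightarrow> p ! i \<le> chain_floor_radj (\<iota> i) (k i) (m i) (q ! i)"
    if i: "i < n" for i
  proof -
    obtain j0 where "j0 < k i" "\<iota> i j0 \<le> p ! i" using covering_coord[OF p i] .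
    moreover have "p ! i < m i" "q ! i < k i" using p q i by (simp_all add: grid_def)
    ultimately show ?thesis using chain_floor_le_iff[OF aligned_strict_mono[OF i]] by blast
  qed
  then show "grid_le (grid_floor n k \<iota> p) q \<longleftrightarrow> grid_le p (grid_floor_radj n k m \<iota> q)"
    using p q by (auto simp: grid_floor_eq grid_floor_radj_def grid_le_def grid_def)
next
  fix q assume q: "q \<in> grid n k"
  then have "grid_floor_radj n k m \<iota> q \<in> grid n m"
    using chain_floor_radj_less aligned_bound by (simp add: grid_floor_radj_def grid_def)
  then show "grid_floor n k \<iota> (grid_floor_radj n k m \<iota> q) = q"
    using q chain_floor_chain_floor_radj[OF aligned_strict_mono aligned_bound]
    by (auto simp: grid_floor_eq grid_floor_radj_def grid_def intro: nth_equalityI)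
qed (auto intro: grid_le_refl grid_le_trans)

end

theorem mainTheorem11:
  fixes n :: nat and m k :: "nat \<Rightarrow> nat" and \<iota> :: "nat \<Rightarrow> nat \<Rightarrow> nat"
  assumes "aligned_incl n k m \<iota>"
    and "upset (grid n m) grid_le (grid_map \<iota> ` grid n k) = grid n m"
  shows "\<exists>(C :: (nat list, 'k::field) rep \<Rightarrow> (nat list, 'k) rep) \<eta>.
     is_left_adjoint (grid n m) grid_le (grid n k) grid_le
        (lan_obj (grid_floor n k \<iota>)) (lan_mor (grid_floor n k \<iota>)) C \<eta> \<and>
     (\<forall>A B. A \<subseteq> grid n m \<longrightarrow> B \<subseteq> grid n m \<longrightarrow> (\<forall>b\<in>B. \<exists>a\<in>A. grid_le a b) \<longrightarrow>
        rep_iso (grid n k) grid_le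
          (C (indicator_rep (upset (grid n m) grid_le A - upset (grid n m) grid_le B)))
          (indicator_rep (upset (grid n k) grid_le (grid_floor n k \<iota> ` A)
                          - upset (grid n k) grid_le (grid_floor n k \<iota> ` B)))) \<and>
     (\<forall>M. is_rep (grid n m) grid_le M \<longrightarrow> spread_decomposable (grid n m) grid_le M \<longrightarrow>
        spread_decomposable (grid n k) grid_le (C M))"
proof -
  interpret galois_insertion "grid n m" grid_le "grid n k" grid_le "grid_floor n k \<iota>" "grid_floor_radj n k m \<iota>"
    using assms by (rule galois_insertion_grid)
  show ?thesis
    using is_left_adjoint_pullback_rep rep_iso_pullback_indicator_upset_diff
      spread_decomposable_pullback_rep[OF finite_grid grid_le_refl]
    by (intro exI[of _ "pullback_rep (grid_floor_radj n k m \<iota>)"]) blast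
qed

end
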